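(* Let $\lambda\in\mathbb{R}$, let $r,n\ge1$ be integers and let $0\le k\le nr$. Then \[ S_\lambda^{(r,r)}(n,k)=\frac{(-1)^k}{k!}\sum_{p=0}^{k}(-1)^p\binom{k}{p}\big((p)_r\big)_{n,\lambda}. \]
   Context: Notation: $(x)_0=1$, $(x)_m=x(x-1)\cdots(x-m+1)$ for $m\ge1$; the generalized (degenerate) falling factorial is $(y)_{0,\lambda}=1$, $(y)_{n,\lambda}=y(y-\lambda)\cdots(y-(n-1)\lambda)$ for $n\ge1$. Let $D=\frac{d}{dx}$ and let $x$ also denote multiplication by $x$. The numbers $S_\lambda^{(r,r)}(n,k)$, $0\le k\le nr$ (generalized degenerate $(r,r)$-Stirling numbers of the second kind) are defined by the operator identity \[ \prod_{j=0}^{n-1}\Big(x^{r}D^{r}-j\lambda\Big)=\sum_{k=0}^{nr}S_\lambda^{(r,r)}(n,k)\,x^{k}D^{k}. \] *)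

theory Defs
  imports "HOL-Computational_Algebra.Polynomial"
begin

definition ffall :: "real \<Rightarrow> nat \<Rightarrow> real" where
  "ffall x m = (\<Prod>i<m. x - real i)"

definition gffall :: "real \<Rightarrow> nat \<Rightarrow> real \<Rightarrow> real" where
  "gffall y n lam = (\<Prod>i<n. y - real i * lam)"

definition xkDk :: "nat \<Rightarrow> real poly \<Rightarrow> real poly" where
  "xkDk k p = monom 1 k * (pderiv ^^ k) p"

text \<open>The operator product prod_{j=0}^{n-1} (x^r D^r - j lambda) (factors commute).\<close>
fun opprod :: "real \<Rightarrow> nat \<Rightarrow> nat \<Rightarrow> real poly \<Rightarrow> real poly" where
  "opprod lam r 0 p = p"
| "opprod lam r (Suc n) p =
     xkDk r (opprod lam r n p) - smult (real n * lam) (opprod lam r n p)"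

definition Srr :: "real \<Rightarrow> nat \<Rightarrow> nat \<Rightarrow> nat \<Rightarrow> real" where
  "Srr lam r n = (THE c. (\<forall>k>n*r. c k = 0) \<and>
      (\<forall>p. opprod lam r n p = (\<Sum>k\<le>n*r. smult (c k) (xkDk k p))))"

end

theory Submission
  imports Defs
begin

text \<open>Both kinds of operators are diagonal on monomials: \<open>x\<^sup>kD\<^sup>k x\<^sup>m = (m)\<^sub>k x\<^sup>m\<close>, so the
  operator product multiplies \<open>x\<^sup>m\<close> by \<open>((m)\<^sub>r)\<^sub>n\<^sub>,\<^sub>\<lambda>\<close>. Hence an expansion in the
  operators \<open>x\<^sup>kD\<^sup>k\<close> is the same as an identity \<open>((m)\<^sub>r)\<^sub>n\<^sub>,\<^sub>\<lambda> = \<Sum>\<^sub>k c\<^sub>k (m)\<^sub>k\<close> for all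
  natural \<open>m\<close>. Such an identity exists because \<open>((x)\<^sub>r)\<^sub>n\<^sub>,\<^sub>\<lambda>\<close> is a polynomial of degree
  at most \<open>nr\<close>, and its coefficients are recovered by the \<open>k\<close>-th finite difference at \<open>0\<close>,
  because \<open>\<Sum>\<^sub>p (-1)\<^sup>p C(k,p) (p)\<^sub>j = (-1)\<^sup>k k! \<delta>\<^sub>j\<^sub>k\<close>.\<close>

lemma ffall_of_nat: "ffall (real p) j = fact j * real (p choose j)"
  unfolding ffall_def binomial_gbinomial gbinomial_mult_fact lessThan_atLeast0 by simp

lemma alternating_sum_choose_mult_choose:
  "(\<Sum>p=0..k. (-1) ^ p * of_nat (k choose p) * of_nat (p choose j) :: 'a :: comm_ring_1) =
   (if j = k then (-1) ^ k else 0)"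
proof (cases "j \<le> k")
  case False
  then show ?thesis by (auto intro!: sum.neutral simp: binomial_eq_0)
next
  case True
  have "(\<Sum>p=0..k. (-1) ^ p * of_nat (k choose p) * of_nat (p choose j) :: 'a) =
        (\<Sum>p=j..k. (-1) ^ p * of_nat (k choose j) * of_nat ((k - j) choose (p - j)))"
  proof (rule sum.mono_neutral_cong_right)
    fix p assume "p \<in> {j..k}"
    then have "of_nat (k choose p) * of_nat (p choose j) =
               (of_nat (k choose j) * of_nat ((k - j) choose (p - j)) :: 'a)"
      by (metis choose_mult atLeastAtMost_iff of_nat_mult)
    then show "(-1) ^ p * of_nat (k choose p) * of_nat (p choose j) =
               ((-1) ^ p * of_nat (k choose j) * of_nat ((k - j) choose (p - j)) :: 'a)"
      by (simp add: mult.assoc)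
  qed (auto simp: binomial_eq_0)
  also have "\<dots> = (\<Sum>i=0..k-j. (-1) ^ (i + j) * of_nat (k choose j) * of_nat ((k - j) choose i))"
    using sum.shift_bounds_cl_nat_ivl[of "\<lambda>p. (-1) ^ p * of_nat (k choose j) * of_nat ((k - j) choose (p - j))" 0 j "k - j"] True
    by simp
  also have "\<dots> = (-1) ^ j * of_nat (k choose j) * (\<Sum>i\<le>k-j. (-1) ^ i * of_nat ((k - j) choose i))"
    by (simp add: sum_distrib_left atLeast0AtMost power_add mult_ac)
  also have "\<dots> = (if j = k then (-1) ^ k else 0)"
    using True choose_alternating_sum[of "k - j", where 'a = 'a] by auto
  finally show ?thesis .
qed

lemma alternating_sum_ffall:
  "(\<Sum>p=0..k. (-1) ^ p * real (k choose p) * ffall (real p) j) = (if j = k then (-1) ^ k * fact k else 0)"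
proof -
  have "(\<Sum>p=0..k. (-1) ^ p * real (k choose p) * ffall (real p) j) =
        fact j * (\<Sum>p=0..k. (-1) ^ p * real (k choose p) * real (p choose j))"
    by (simp add: ffall_of_nat sum_distrib_left mult_ac)
  then show ?thesis
    by (simp add: alternating_sum_choose_mult_choose)
qed

lemma ffall_expansion_coeff:
  assumes expansion: "\<And>m. f m = (\<Sum>j\<le>N. c j * ffall (real m) j)" and "k \<le> N"
  shows "c k = (-1) ^ k / fact k * (\<Sum>p=0..k. (-1) ^ p * real (k choose p) * f p)"
proof -
  have "(\<Sum>p=0..k. (-1) ^ p * real (k choose p) * f p) =
        (\<Sum>j\<le>N. c j * (\<Sum>p=0..k. (-1) ^ p * real (k choose p) * ffall (real p) j))"
    by (simp add: expansion sum_distrib_left sum.swap[of _ "{0..k}"] mult_ac)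
  also have "\<dots> = c k * ((-1) ^ k * fact k)"
    using \<open>k \<le> N\<close> by (simp add: alternating_sum_ffall if_distrib[of "(*) _"] cong: if_cong)
  finally show ?thesis
    by (simp add: field_simps)
qed

definition ffall_poly :: "nat \<Rightarrow> real poly" where
  "ffall_poly j = (\<Prod>i<j. [:- real i, 1:])"

lemma poly_ffall_poly: "poly (ffall_poly j) x = ffall x j"
  by (simp add: ffall_poly_def ffall_def poly_prod)

lemma degree_ffall_poly: "degree (ffall_poly j) = j"
  by (simp add: ffall_poly_def degree_prod_eq_sum_degree)

lemma lead_coeff_ffall_poly: "lead_coeff (ffall_poly j) = 1"
  by (simp add: ffall_poly_def lead_coeff_prod)

lemma poly_ffall_expansion:
  "degree Q \<le> d \<Longrightarrow> \<exists>c. (\<forall>k>d. c k = 0) \<and> (\<forall>x. poly Q x = (\<Sum>k\<le>d. c k * ffall x k))"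
proof (induction d arbitrary: Q)
  case 0
  then show ?case
    by (intro exI[of _ "\<lambda>k. if k = 0 then coeff Q 0 else 0"])
       (auto simp: ffall_def elim!: degree_eq_zeroE)
next
  case (Suc d)
  define a where "a = coeff Q (Suc d)"
  have "degree (Q - smult a (ffall_poly (Suc d))) \<le> d"
  proof (rule degree_le, intro allI impI)
    fix i assume "d < i"
    then consider "i = Suc d" | "Suc d < i" by linarith
    then show "coeff (Q - smult a (ffall_poly (Suc d))) i = 0"
      using Suc.prems lead_coeff_ffall_poly[of "Suc d"]
      by cases (auto simp: a_def degree_ffall_poly coeff_eq_0)
  qed
  then obtain c where "\<forall>k>d. c k = 0"
    and c: "\<And>x. poly (Q - smult a (ffall_poly (Suc d))) x = (\<Sum>k\<le>d. c k * ffall x k)"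
    using Suc.IH by blast
  have "poly Q x = (\<Sum>k\<le>Suc d. (c(Suc d := a)) k * ffall x k)" for x
    using c[of x] by (simp add: poly_ffall_poly)
  with \<open>\<forall>k>d. c k = 0\<close> show ?case
    by (intro exI[of _ "c(Suc d := a)"]) auto
qed

lemma gffall_ffall_expansion:
  "\<exists>c. (\<forall>k>n*r. c k = 0) \<and> (\<forall>x. gffall (ffall x r) n lam = (\<Sum>k\<le>n*r. c k * ffall x k))"
proof -
  define Q where "Q = (\<Prod>i<n. ffall_poly r - [:real i * lam:])"
  have "poly Q x = gffall (ffall x r) n lam" for x
    by (simp add: Q_def poly_prod poly_ffall_poly gffall_def)
  moreover have "degree Q \<le> n * r"
  proof -
    have "degree Q \<le> (\<Sum>i<n. degree (ffall_poly r - [:real i * lam:]))"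
      unfolding Q_def using degree_prod_sum_le[of "{..<n}"] by (simp add: o_def)
    also have "\<dots> \<le> (\<Sum>i<n. r)"
      by (intro sum_mono degree_diff_le) (auto simp: degree_ffall_poly)
    finally show ?thesis by simp
  qed
  ultimately show ?thesis
    using poly_ffall_expansion by metis
qed

lemma coeff_pderiv_iterate:
  "coeff ((pderiv ^^ k) p) j = ffall (real (j + k)) k * coeff p (j + k)"
proof (induction k arbitrary: j)
  case 0
  then show ?case by (simp add: ffall_def)
next
  case (Suc k)
  have "ffall (real (j + Suc k)) (Suc k) = ffall (real (Suc j + k)) k * real (Suc j)"
    by (simp add: ffall_def)
  then show ?case
    by (simp add: coeff_pderiv Suc.IH)
qed

lemma coeff_xkDk: "coeff (xkDk k p) m = ffall (real m) k * coeff p m"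
  by (auto simp: xkDk_def coeff_monom_mult coeff_pderiv_iterate ffall_of_nat binomial_eq_0)

lemma coeff_opprod: "coeff (opprod lam r n p) m = gffall (ffall (real m) r) n lam * coeff p m"
  by (induction n) (simp_all add: gffall_def coeff_xkDk algebra_simps)

lemma opprod_eq_sum_xkDk_iff:
  "(\<forall>p. opprod lam r n p = (\<Sum>k\<le>N. smult (c k) (xkDk k p))) \<longleftrightarrow>
   (\<forall>m. gffall (ffall (real m) r) n lam = (\<Sum>k\<le>N. c k * ffall (real m) k))"
proof -
  have coeff_eq: "coeff (\<Sum>k\<le>N. smult (c k) (xkDk k p)) m = (\<Sum>k\<le>N. c k * ffall (real m) k) * coeff p m"
    for p m
    by (simp add: coeff_sum coeff_xkDk sum_distrib_right mult.assoc)
  show ?thesis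
  proof (intro iffI allI)
    fix m
    assume "\<forall>p. opprod lam r n p = (\<Sum>k\<le>N. smult (c k) (xkDk k p))"
    then have "coeff (opprod lam r n (monom 1 m)) m = coeff (\<Sum>k\<le>N. smult (c k) (xkDk k (monom 1 m))) m"
      by simp
    then show "gffall (ffall (real m) r) n lam = (\<Sum>k\<le>N. c k * ffall (real m) k)"
      by (simp add: coeff_eq coeff_opprod)
  next
    fix p
    assume "\<forall>m. gffall (ffall (real m) r) n lam = (\<Sum>k\<le>N. c k * ffall (real m) k)"
    then show "opprod lam r n p = (\<Sum>k\<le>N. smult (c k) (xkDk k p))"
      by (intro poly_eqI) (simp add: coeff_eq coeff_opprod)
  qed
qed

definition xkDk_expansion :: "real \<Rightarrow> nat \<Rightarrow> nat \<Rightarrow> (nat \<Rightarrow> real) \<Rightarrow> bool" where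
  "xkDk_expansion lam r n c \<longleftrightarrow> (\<forall>k>n*r. c k = 0) \<and>
     (\<forall>p. opprod lam r n p = (\<Sum>k\<le>n*r. smult (c k) (xkDk k p)))"

lemma xkDk_expansion_exists: "\<exists>c. xkDk_expansion lam r n c"
  using gffall_ffall_expansion[of n r lam]
  unfolding xkDk_expansion_def opprod_eq_sum_xkDk_iff by blast

lemma xkDk_expansion_coeff:
  assumes "xkDk_expansion lam r n c" and "k \<le> n * r"
  shows "c k = (-1) ^ k / fact k *
    (\<Sum>p=0..k. (-1) ^ p * real (k choose p) * gffall (ffall (real p) r) n lam)"
  using assms ffall_expansion_coeff[of "\<lambda>m. gffall (ffall (real m) r) n lam"]
  unfolding xkDk_expansion_def opprod_eq_sum_xkDk_iff by blast

lemma Srr_eqI: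
  assumes "xkDk_expansion lam r n c"
  shows "Srr lam r n = c"
proof -
  have "d = c" if "xkDk_expansion lam r n d" for d
  proof
    fix k
    show "d k = c k"
      using xkDk_expansion_coeff[OF that] xkDk_expansion_coeff[OF assms] that assms
      by (cases "k \<le> n * r") (auto simp: xkDk_expansion_def)
  qed
  with assms show ?thesis
    unfolding Srr_def xkDk_expansion_def[symmetric] by (rule the_equality)
qed

theorem theorem5:
  fixes lam :: real and r n k :: nat
  assumes "r \<ge> 1" and "n \<ge> 1" and "k \<le> n * r"
  shows "Srr lam r n k =
    (-1) ^ k / fact k *
      (\<Sum>p=0..k. (-1) ^ p * real (k choose p) * gffall (ffall (real p) r) n lam)"
proof -
  obtain c where c: "xkDk_expansion lam r n c"
    using xkDk_expansion_exists by blast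
  then have "Srr lam r n = c"
    by (rule Srr_eqI)
  with c \<open>k \<le> n * r\<close> show ?thesis
    by (simp add: xkDk_expansion_coeff)
qed

end
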